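(* Let $H(y)$, $y=(y_1,y_2)$, be of the form $H(y)=G(h)+y_i\Delta(y_i,h)$ with $h=y_1y_2$, for some $i\in\{1,2\}$, where $G$ and $\Delta$ are analytic germs and $G(h)=\lambda h+O(h^2)$ with $\lambda\ne0$. Then $(G,\omega)$ is the Birkhoff–Siegel normal form of the pair $(H,\omega)$, $\omega=dy_1\wedge dy_2$; that is, there exist analytic coordinates $u=(u_1,u_2)$ in which $\omega=du_1\wedge du_2$ and $H=G(u_1u_2)$.
   Context: For a germ $H:\mathbb C^2\to\mathbb C$ with a non-degenerate critical point and a symplectic form $\omega$, the Birkhoff–Siegel normal form of $(H,\omega)$ is the pair $(G_H,\omega)$ where $G_H$ is a germ of one variable such that in some analytic coordinates $u$, $\omega=du_1\wedge du_2$ and $H=G_H(u_1u_2)$; $G_H$ is unique up to the involution $G_H(h)\mapsto G_H(-h)$. *)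

theory Defs
  imports "HOL-Analysis.Analysis"
begin

definition holo2 :: "(complex \<times> complex \<Rightarrow> complex) \<Rightarrow> (complex \<times> complex) set \<Rightarrow> bool" where
  "holo2 f S \<longleftrightarrow> (\<forall>z\<in>S. \<exists>a b. (f has_derivative (\<lambda>(x, y). a * x + b * y)) (at z))"

definition analytic_germ2 :: "(complex \<times> complex \<Rightarrow> complex) \<Rightarrow> bool" where
  "analytic_germ2 f \<longleftrightarrow> (\<exists>r>0. holo2 f (ball 0 r))"

text \<open>Analytic coordinates u = (u1, u2) on an open set U in which
  omega = dy1 /\ dy2 becomes du1 /\ du2: u is injective, holomorphic with
  complex-linear differential, and its Jacobian determinant is 1 everywhere
  (the pull-back of du1 /\ du2 is det(Du) dy1 /\ dy2).\<close>
definition symplectic_chart ::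
  "(complex \<times> complex \<Rightarrow> complex \<times> complex) \<Rightarrow> (complex \<times> complex) set \<Rightarrow> bool" where
  "symplectic_chart u U \<longleftrightarrow> open U \<and> inj_on u U \<and>
     (\<forall>z\<in>U. \<exists>a b c d. (u has_derivative (\<lambda>(x, y). (a * x + b * y, c * x + d * y))) (at z)
                      \<and> a * d - b * c = 1)"

end

theory Submission
  imports Defs "HOL-Complex_Analysis.Complex_Analysis"
begin

(* Write h = y1 y2. For i = 1 the hypothesis says H(y) = phi(y1, h) with
   phi(x, h) = G(h) + x Delta(x, h), so phi(0, h) = G(h); composing with a local inverse
   of G and applying Hadamard's lemma in x gives H = G(y1 w) with w = y2 + E(y1, y1 y2).
   For every A the map u = (y1 e^A, w e^-A) keeps u1 u2 = y1 w, and for A = a(y1, y1 w)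
   its Jacobian is (dw/dy2) (1 + y1 da/dx).  In the coordinates (x, k) = (y1, y1 w),
   obtained by inverting the shear (x, h) -> (x, h + x E(x, h)), the condition det Du = 1
   is therefore an ODE in x for a, solved by integration.  The inverse function theorem
   makes u a chart near 0, and the case i = 2 follows by exchanging y1 and y2. *)

section \<open>Holomorphic functions of two variables\<close>

text \<open>Osgood's characterisation: continuous and holomorphic in each variable separately;
  \<open>holomorphic2_on_has_derivative\<close> recovers the complex-linear derivative required by \<open>holo2\<close>.\<close>

definition holomorphic2_on :: "(complex \<times> complex \<Rightarrow> complex) \<Rightarrow> (complex \<times> complex) set \<Rightarrow> bool" where
  "holomorphic2_on f S \<longleftrightarrow> open S \<and> continuous_on S f \<and>
     (\<forall>z w. (z, w) \<in> S \<longrightarrow> (\<lambda>z'. f (z', w)) field_differentiable at z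
                          \<and> (\<lambda>w'. f (z, w')) field_differentiable at w)"

definition deriv1 :: "(complex \<times> complex \<Rightarrow> complex) \<Rightarrow> complex \<times> complex \<Rightarrow> complex" where
  "deriv1 f p = deriv (\<lambda>z. f (z, snd p)) (fst p)"

definition deriv2 :: "(complex \<times> complex \<Rightarrow> complex) \<Rightarrow> complex \<times> complex \<Rightarrow> complex" where
  "deriv2 f p = deriv (\<lambda>w. f (fst p, w)) (snd p)"

definition jacobian2 ::
  "(complex \<times> complex \<Rightarrow> complex) \<Rightarrow> (complex \<times> complex \<Rightarrow> complex) \<Rightarrow> complex \<times> complex \<Rightarrow> complex" where
  "jacobian2 f1 f2 p = deriv1 f1 p * deriv2 f2 p - deriv2 f1 p * deriv1 f2 p"

lemma holomorphic2_onI: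
  assumes "open S" "continuous_on S f"
    "\<And>z w. (z, w) \<in> S \<Longrightarrow> (\<lambda>z'. f (z', w)) field_differentiable at z"
    "\<And>z w. (z, w) \<in> S \<Longrightarrow> (\<lambda>w'. f (z, w')) field_differentiable at w"
  shows "holomorphic2_on f S"
  using assms by (auto simp: holomorphic2_on_def)

lemma holomorphic2_onD:
  assumes "holomorphic2_on f S"
  shows "open S" "continuous_on S f"
    "\<And>z w. (z, w) \<in> S \<Longrightarrow> (\<lambda>z'. f (z', w)) field_differentiable at z"
    "\<And>z w. (z, w) \<in> S \<Longrightarrow> (\<lambda>w'. f (z, w')) field_differentiable at w"
  using assms by (auto simp: holomorphic2_on_def)

lemma holomorphic2_on_subset: "holomorphic2_on f S \<Longrightarrow> open T \<Longrightarrow> T \<subseteq> S \<Longrightarrow> holomorphic2_on f T"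
  unfolding holomorphic2_on_def by (meson continuous_on_subset subsetD)

lemma holomorphic2_on_const: "open S \<Longrightarrow> holomorphic2_on (\<lambda>p. c) S"
  by (rule holomorphic2_onI) auto

lemma holomorphic2_on_fst: "open S \<Longrightarrow> holomorphic2_on fst S"
  by (rule holomorphic2_onI) (auto intro!: continuous_intros)

lemma holomorphic2_on_snd: "open S \<Longrightarrow> holomorphic2_on snd S"
  by (rule holomorphic2_onI) (auto intro!: continuous_intros)

lemma holomorphic2_on_add: "holomorphic2_on f S \<Longrightarrow> holomorphic2_on g S \<Longrightarrow> holomorphic2_on (\<lambda>p. f p + g p) S"
  by (rule holomorphic2_onI) (auto simp: holomorphic2_on_def intro!: continuous_intros field_differentiable_add)

lemma holomorphic2_on_minus: "holomorphic2_on f S \<Longrightarrow> holomorphic2_on (\<lambda>p. - f p) S"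
  by (rule holomorphic2_onI) (auto simp: holomorphic2_on_def intro!: continuous_intros field_differentiable_minus)

lemma holomorphic2_on_diff: "holomorphic2_on f S \<Longrightarrow> holomorphic2_on g S \<Longrightarrow> holomorphic2_on (\<lambda>p. f p - g p) S"
  by (rule holomorphic2_onI) (auto simp: holomorphic2_on_def intro!: continuous_intros field_differentiable_diff)

lemma holomorphic2_on_mult: "holomorphic2_on f S \<Longrightarrow> holomorphic2_on g S \<Longrightarrow> holomorphic2_on (\<lambda>p. f p * g p) S"
  by (rule holomorphic2_onI) (auto simp: holomorphic2_on_def intro!: continuous_intros field_differentiable_mult)

lemma holomorphic2_on_divide:
  "holomorphic2_on f S \<Longrightarrow> holomorphic2_on g S \<Longrightarrow> (\<And>p. p \<in> S \<Longrightarrow> g p \<noteq> 0) \<Longrightarrow> holomorphic2_on (\<lambda>p. f p / g p) S"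
  by (rule holomorphic2_onI) (auto simp: holomorphic2_on_def intro!: continuous_intros field_differentiable_divide)

lemma holomorphic2_on_compose:
  assumes "holomorphic2_on f S" "g holomorphic_on U" "open U" "\<And>p. p \<in> S \<Longrightarrow> f p \<in> U"
  shows "holomorphic2_on (\<lambda>p. g (f p)) S"
proof (rule holomorphic2_onI)
  show "open S" using holomorphic2_onD(1)[OF assms(1)] .
  have "continuous_on U g" using assms(2) holomorphic_on_imp_continuous_on by blast
  then show "continuous_on S (\<lambda>p. g (f p))"
    using holomorphic2_onD(2)[OF assms(1)] assms(4) by (auto intro!: continuous_on_compose2[of U g])
  fix z w assume zw: "(z, w) \<in> S"
  have g: "g field_differentiable at (f (z, w))"
    using assms(2-4) zw holomorphic_on_imp_differentiable_at by blast
  show "(\<lambda>z'. g (f (z', w))) field_differentiable at z"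
    using field_differentiable_compose[OF holomorphic2_onD(3)[OF assms(1) zw] g] by (simp add: o_def)
  show "(\<lambda>w'. g (f (z, w'))) field_differentiable at w"
    using field_differentiable_compose[OF holomorphic2_onD(4)[OF assms(1) zw] g] by (simp add: o_def)
qed

lemma holomorphic_on_slice1:
  assumes "holomorphic2_on f S" "T \<times> {w} \<subseteq> S" "open T"
  shows "(\<lambda>z. f (z, w)) holomorphic_on T"
  using assms unfolding holomorphic2_on_def holomorphic_on_def
  by (meson field_differentiable_at_within mem_Sigma_iff singletonI subsetD)

lemma holomorphic_on_slice2:
  assumes "holomorphic2_on f S" "{z} \<times> T \<subseteq> S" "open T"
  shows "(\<lambda>w. f (z, w)) holomorphic_on T"
  using assms unfolding holomorphic2_on_def holomorphic_on_def
  by (meson field_differentiable_at_within mem_Sigma_iff singletonI subsetD)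

lemma has_field_derivative_deriv1:
  assumes "holomorphic2_on f S" "(z, w) \<in> S"
  shows "((\<lambda>z'. f (z', w)) has_field_derivative deriv1 f (z, w)) (at z)"
  using holomorphic2_onD(3)[OF assms] by (simp add: deriv1_def DERIV_deriv_iff_field_differentiable)

lemma has_field_derivative_deriv2:
  assumes "holomorphic2_on f S" "(z, w) \<in> S"
  shows "((\<lambda>w'. f (z, w')) has_field_derivative deriv2 f (z, w)) (at w)"
  using holomorphic2_onD(4)[OF assms] by (simp add: deriv2_def DERIV_deriv_iff_field_differentiable)

lemma deriv1_eqI: "((\<lambda>z'. f (z', w)) has_field_derivative d) (at z) \<Longrightarrow> deriv1 f (z, w) = d"
  by (simp add: deriv1_def DERIV_imp_deriv)

lemma deriv2_eqI: "((\<lambda>w'. f (z, w')) has_field_derivative d) (at w) \<Longrightarrow> deriv2 f (z, w) = d"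
  by (simp add: deriv2_def DERIV_imp_deriv)

lemma cball_Times_subset_open:
  fixes p :: "'a::real_normed_vector \<times> 'b::real_normed_vector"
  assumes "open S" "p \<in> S"
  obtains r where "r > 0" "cball (fst p) r \<times> cball (snd p) r \<subseteq> S"
proof -
  obtain e where e: "e > 0" "ball p e \<subseteq> S" using assms open_contains_ball by blast
  show ?thesis
  proof
    show "e/3 > 0" using e by simp
    show "cball (fst p) (e/3) \<times> cball (snd p) (e/3) \<subseteq> S"
    proof
      fix q assume q: "q \<in> cball (fst p) (e/3) \<times> cball (snd p) (e/3)"
      have "dist p q \<le> norm (fst (p - q)) + norm (snd (p - q))"
        using norm_Pair_le[of "fst (p - q)" "snd (p - q)"] by (simp add: dist_norm del: fst_diff snd_diff)
      also have "\<dots> = dist (fst p) (fst q) + dist (snd p) (snd q)" by (simp add: dist_norm)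
      also have "\<dots> < e" using q e by (auto simp: mem_cball)
      finally show "q \<in> S" using e by auto
    qed
  qed
qed

section \<open>Partial derivatives via Cauchy estimates\<close>

lemma norm_deriv_deriv_le:
  fixes \<phi> :: "complex \<Rightarrow> complex"
  assumes hol: "\<phi> holomorphic_on S" "open S" and sub: "cball \<xi> \<rho> \<subseteq> S" and \<rho>: "\<rho> > 0"
    and M: "\<And>z. z \<in> S \<Longrightarrow> norm (\<phi> z) \<le> M"
  shows "norm (deriv (deriv \<phi>) \<xi>) \<le> 2 * M / \<rho>^2"
proof -
  have "norm ((deriv ^^ 2) \<phi> \<xi>) \<le> fact 2 * M / \<rho>^2"
  proof (rule Cauchy_inequality)
    show "\<phi> holomorphic_on ball \<xi> \<rho>"
      using hol(1) sub ball_subset_cball holomorphic_on_subset by blast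
    show "continuous_on (cball \<xi> \<rho>) \<phi>"
      using hol(1) sub holomorphic_on_imp_continuous_on holomorphic_on_subset by blast
    fix z assume "norm (\<xi> - z) = \<rho>"
    then show "norm (\<phi> z) \<le> M" using sub M by (auto simp: dist_norm)
  qed (use \<rho> in auto)
  then show ?thesis by (simp add: numeral_2_eq_2)
qed

lemma linearization_error_le:
  fixes \<phi> :: "complex \<Rightarrow> complex"
  assumes hol: "\<phi> holomorphic_on S" "open S" and sub: "cball w (norm b) \<subseteq> S"
    and C: "\<And>\<xi>. \<xi> \<in> cball w (norm b) \<Longrightarrow> norm (deriv (deriv \<phi>) \<xi>) \<le> C"
  shows "norm (\<phi> (w + b) - \<phi> w - deriv \<phi> w * b) \<le> C * (norm b)^2"
proof -
  have C0: "C \<ge> 0" using C[of w] by (meson centre_in_cball norm_ge_zero order_trans)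
  have d: "(\<phi> has_field_derivative deriv \<phi> z) (at z)" "(deriv \<phi> has_field_derivative deriv (deriv \<phi>) z) (at z)"
    if "z \<in> cball w (norm b)" for z
    using that sub hol holomorphic_derivI holomorphic_deriv by (blast intro: holomorphic_derivI)+
  have lip: "norm (deriv \<phi> z - deriv \<phi> w) \<le> C * norm b" if z: "z \<in> cball w (norm b)" for z
  proof -
    have "norm (deriv \<phi> z - deriv \<phi> w) \<le> C * norm (z - w)"
      by (rule field_differentiable_bound[of "cball w (norm b)" _ "deriv (deriv \<phi>)"])
        (use z C d(2) in \<open>auto intro: has_field_derivative_at_within\<close>)
    also have "\<dots> \<le> C * norm b" using z C0 by (intro mult_left_mono) (auto simp: dist_norm norm_minus_commute)
    finally show ?thesis .
  qed
  have "norm ((\<phi> (w + b) - deriv \<phi> w * (w + b)) - (\<phi> w - deriv \<phi> w * w)) \<le> (C * norm b) * norm (w + b - w)"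
    by (rule field_differentiable_bound[of "cball w (norm b)" _ "\<lambda>z. deriv \<phi> z - deriv \<phi> w"])
      (use lip d(1) in \<open>auto intro!: derivative_eq_intros intro: has_field_derivative_at_within
        simp: dist_norm\<close>)
  then show ?thesis by (simp add: power2_eq_square algebra_simps)
qed

lemma holomorphic2_on_bounded_near:
  assumes "holomorphic2_on f S" "(z1, w1) \<in> S"
  obtains r M where "r > 0" "M > 0" "cball z1 (2*r) \<times> cball w1 (2*r) \<subseteq> S"
    "\<And>z w. z \<in> cball z1 (2*r) \<Longrightarrow> w \<in> cball w1 (2*r) \<Longrightarrow> norm (f (z, w)) \<le> M"
proof -
  obtain r0 where r0: "r0 > 0" "cball z1 r0 \<times> cball w1 r0 \<subseteq> S"
    using cball_Times_subset_open[OF holomorphic2_onD(1)[OF assms(1)] assms(2)] by auto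
  define K where "K = cball z1 r0 \<times> cball w1 r0"
  have "continuous_on K f"
    using holomorphic2_onD(2)[OF assms(1)] r0 continuous_on_subset K_def by blast
  then have "compact (f ` K)" unfolding K_def by (simp add: compact_Times compact_continuous_image)
  then obtain B where B: "B > 0" "\<And>x. x \<in> f ` K \<Longrightarrow> norm x \<le> B"
    using compact_imp_bounded bounded_pos by metis
  show ?thesis
  proof
    show "r0/2 > 0" "B > 0" using r0 B by auto
    show "cball z1 (2*(r0/2)) \<times> cball w1 (2*(r0/2)) \<subseteq> S" using r0 by simp
    fix z w assume "z \<in> cball z1 (2*(r0/2))" "w \<in> cball w1 (2*(r0/2))"
    then show "norm (f (z, w)) \<le> B" using B by (simp add: K_def)
  qed
qed

lemma deriv2_linearization_bound:
  assumes f: "holomorphic2_on f S" and r: "r > 0" and sub: "cball z1 (2*r) \<times> cball w1 (2*r) \<subseteq> S"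
    and M: "\<And>z w. z \<in> cball z1 (2*r) \<Longrightarrow> w \<in> cball w1 (2*r) \<Longrightarrow> norm (f (z, w)) \<le> M"
    and z: "z \<in> cball z1 (2*r)" and w: "w \<in> cball w1 r" and b: "norm b \<le> r/2"
  shows "norm (f (z, w+b) - f (z, w) - deriv2 f (z, w) * b) \<le> (32*M/r^2) * (norm b)^2"
proof -
  have hol: "(\<lambda>w. f (z, w)) holomorphic_on ball w1 (2*r)"
    by (rule holomorphic_on_slice2[OF f]) (use sub z ball_subset_cball in auto)
  have "norm (f (z, w + b) - f (z, w) - deriv (\<lambda>w. f (z, w)) w * b) \<le> (32*M/r^2) * (norm b)^2"
  proof (rule linearization_error_le[OF hol open_ball])
    have near: "dist w1 x \<le> 3*r/2" if "x \<in> cball w (norm b)" for x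
      using that w b dist_triangle[of w1 x w] by (auto simp: dist_commute)
    have in_w1: "cball x (r/4) \<subseteq> ball w1 (2*r)" if "x \<in> cball w (norm b)" for x
    proof
      fix y assume "y \<in> cball x (r/4)"
      then have "dist w1 y \<le> dist w1 x + r/4" using dist_triangle[of w1 y x] by simp
      then show "y \<in> ball w1 (2*r)" using near[OF that] r by simp
    qed
    show "cball w (norm b) \<subseteq> ball w1 (2*r)"
    proof
      fix x assume "x \<in> cball w (norm b)"
      then show "x \<in> ball w1 (2*r)" using near[of x] r by simp
    qed
    fix \<xi> assume "\<xi> \<in> cball w (norm b)"
    from norm_deriv_deriv_le[OF hol open_ball in_w1[OF this]] r M z ball_subset_cball
    show "norm (deriv (deriv (\<lambda>w. f (z, w))) \<xi>) \<le> 32*M/r^2"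
      by (fastforce simp: power_divide)
  qed
  then show ?thesis by (simp add: deriv2_def)
qed

definition diff_quotient2 :: "(complex \<times> complex \<Rightarrow> complex) \<Rightarrow> complex \<Rightarrow> complex \<times> complex \<Rightarrow> complex" where
  "diff_quotient2 f b p = (f (fst p, snd p + b) - f p) / b"

lemma uniform_limit_diff_quotient2:
  assumes f: "holomorphic2_on f S" and r: "r > 0" and "M > 0"
    and sub: "cball z1 (2*r) \<times> cball w1 (2*r) \<subseteq> S"
    and M: "\<And>z w. z \<in> cball z1 (2*r) \<Longrightarrow> w \<in> cball w1 (2*r) \<Longrightarrow> norm (f (z, w)) \<le> M"
  shows "uniform_limit (cball z1 r \<times> cball w1 r) (diff_quotient2 f) (deriv2 f) (at 0)"
  unfolding uniform_limit_iff diff_quotient2_def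
proof (intro allI impI)
  define C where "C = 32*M/r^2"
  have C: "C > 0" using r \<open>M > 0\<close> by (simp add: C_def)
  fix e :: real assume e: "e > 0"
  show "\<forall>\<^sub>F b in at 0. \<forall>p\<in>cball z1 r \<times> cball w1 r.
          dist ((f (fst p, snd p + b) - f p) / b) (deriv2 f p) < e"
    unfolding eventually_at
  proof (intro exI[of _ "min (r/2) (e/(2*C))"] conjI allI impI ballI)
    show "0 < min (r/2) (e/(2*C))" using r e C by simp
    fix b :: complex and p assume b: "b \<noteq> 0 \<and> dist b 0 < min (r/2) (e/(2*C))"
      and p: "p \<in> cball z1 r \<times> cball w1 r"
    obtain z w where p_eq: "p = (z, w)" by fastforce
    have b0: "b \<noteq> 0" and bn: "norm b \<le> r/2" "norm b < e/(2*C)" using b by auto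
    have zw: "z \<in> cball z1 (2*r)" "w \<in> cball w1 r" using p r by (auto simp: p_eq mem_cball)
    have "dist ((f (fst p, snd p + b) - f p) / b) (deriv2 f p)
        = norm (f (z, w+b) - f (z, w) - deriv2 f (z, w) * b) / norm b"
      using b0 by (simp add: p_eq dist_norm norm_divide[symmetric] diff_divide_distrib)
    also have "\<dots> \<le> C * (norm b)^2 / norm b"
      by (rule divide_right_mono)
        (use deriv2_linearization_bound[OF f r sub M zw bn(1)] in \<open>simp_all add: C_def\<close>)
    also have "\<dots> = C * norm b" using b0 by (simp add: power2_eq_square)
    also have "\<dots> < e" using mult_strict_left_mono[OF bn(2) C] C e by simp
    finally show "dist ((f (fst p, snd p + b) - f p) / b) (deriv2 f p) < e" .
  qed
qed

lemma holomorphic2_on_shift2: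
  assumes f: "holomorphic2_on f S"
  shows "holomorphic2_on (\<lambda>p. f (fst p, snd p + b)) ((\<lambda>p. (fst p, snd p + b)) -` S)"
proof (rule holomorphic2_onI)
  show "open ((\<lambda>p. (fst p, snd p + b)) -` S)"
    by (rule continuous_open_vimage[OF holomorphic2_onD(1)[OF f]]) (auto intro!: continuous_intros)
  show "continuous_on ((\<lambda>p. (fst p, snd p + b)) -` S) (\<lambda>p. f (fst p, snd p + b))"
    by (rule continuous_on_compose2[OF holomorphic2_onD(2)[OF f]]) (auto intro!: continuous_intros)
  fix z w assume "(z, w) \<in> (\<lambda>p. (fst p, snd p + b)) -` S"
  then have zw: "(z, w + b) \<in> S" by simp
  show "(\<lambda>z'. f (fst (z', w), snd (z', w) + b)) field_differentiable at z"
    using holomorphic2_onD(3)[OF f zw] by simp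
  have "(\<lambda>w'. w' + b) field_differentiable at w"
    by (intro field_differentiable_add field_differentiable_ident field_differentiable_const)
  from field_differentiable_compose[OF this holomorphic2_onD(4)[OF f zw]]
  show "(\<lambda>w'. f (fst (z, w'), snd (z, w') + b)) field_differentiable at w"
    by (simp add: o_def)
qed

lemma holomorphic2_on_diff_quotient2:
  assumes f: "holomorphic2_on f S" and b: "b \<noteq> 0"
  shows "holomorphic2_on (diff_quotient2 f b) (S \<inter> (\<lambda>p. (fst p, snd p + b)) -` S)"
proof -
  let ?T = "(\<lambda>p. (fst p, snd p + b)) -` S"
  have "open (S \<inter> ?T)"
    using holomorphic2_onD(1)[OF f] holomorphic2_onD(1)[OF holomorphic2_on_shift2[OF f]] by blast
  then show ?thesis
    unfolding diff_quotient2_def[abs_def] using b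
    by (intro holomorphic2_on_divide holomorphic2_on_diff holomorphic2_on_const
        holomorphic2_on_subset[OF holomorphic2_on_shift2[OF f]] holomorphic2_on_subset[OF f]) auto
qed

lemma eventually_holomorphic2_on_diff_quotient2:
  assumes f: "holomorphic2_on f S" and r: "r > 0" and sub: "cball z1 (2*r) \<times> cball w1 (2*r) \<subseteq> S"
  shows "\<forall>\<^sub>F b in at 0. holomorphic2_on (diff_quotient2 f b) (ball z1 (2*r) \<times> ball w1 (3*r/2))"
  unfolding eventually_at
proof (intro exI[of _ "r/2"] conjI allI impI ballI)
  define N where "N = ball z1 (2*r) \<times> ball w1 (3*r/2)"
  show "r/2 > 0" using r by simp
  fix b :: complex assume b: "b \<noteq> 0 \<and> dist b 0 < r/2"
  have "N \<subseteq> S \<inter> (\<lambda>p. (fst p, snd p + b)) -` S"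
  proof
    fix p assume p: "p \<in> N"
    have "dist w1 (snd p + b) \<le> dist w1 (snd p) + norm b"
      by (metis add_diff_cancel_left' dist_norm dist_triangle2 dist_commute)
    then have "p \<in> cball z1 (2*r) \<times> cball w1 (2*r)"
      "(fst p, snd p + b) \<in> cball z1 (2*r) \<times> cball w1 (2*r)"
      using p b r by (auto simp: N_def mem_Times_iff)
    then show "p \<in> S \<inter> (\<lambda>p. (fst p, snd p + b)) -` S" using sub by auto
  qed
  moreover have "open N" by (simp add: N_def open_Times)
  ultimately show "holomorphic2_on (diff_quotient2 f b) (ball z1 (2*r) \<times> ball w1 (3*r/2))"
    using holomorphic2_on_diff_quotient2[OF f] b holomorphic2_on_subset unfolding N_def by blast
qed

lemma deriv2_isCont_and_differentiable1:
  assumes f: "holomorphic2_on f S" and p: "(z1, w1) \<in> S"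
  shows "isCont (deriv2 f) (z1, w1)" "(\<lambda>z. deriv2 f (z, w1)) field_differentiable at z1"
proof -
  obtain r M where r: "r > 0" "M > 0" and sub: "cball z1 (2*r) \<times> cball w1 (2*r) \<subseteq> S"
    and M: "\<And>z w. z \<in> cball z1 (2*r) \<Longrightarrow> w \<in> cball w1 (2*r) \<Longrightarrow> norm (f (z, w)) \<le> M"
    using holomorphic2_on_bounded_near[OF f p] by blast
  define N where "N = ball z1 (2*r) \<times> ball w1 (3*r/2)"
  define K where "K = cball z1 r \<times> cball w1 r"
  have KN: "K \<subseteq> N" and slice_N: "ball z1 (2*r) \<times> {w1} \<subseteq> N" using r by (auto simp: K_def N_def)
  have ul: "uniform_limit K (diff_quotient2 f) (deriv2 f) (at 0)"
    unfolding K_def by (rule uniform_limit_diff_quotient2[OF f r sub M])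
  have ev_hol: "\<forall>\<^sub>F b in at 0. holomorphic2_on (diff_quotient2 f b) N"
    unfolding N_def by (rule eventually_holomorphic2_on_diff_quotient2[OF f r(1) sub])
  have "continuous_on K (deriv2 f)"
    by (rule uniform_limit_theorem[OF eventually_mono[OF ev_hol] ul])
      (use KN in \<open>auto dest: holomorphic2_onD(2) intro: continuous_on_subset\<close>)
  moreover have "(z1, w1) \<in> interior K"
    using interior_mono[of "ball z1 r \<times> ball w1 r" K] r
    by (auto simp: K_def interior_Times)
  ultimately show "isCont (deriv2 f) (z1, w1)" using continuous_on_interior by blast
  have "\<forall>\<^sub>F b in at 0. continuous_on (cball z1 r) (\<lambda>z. diff_quotient2 f b (z, w1))
          \<and> (\<lambda>z. diff_quotient2 f b (z, w1)) holomorphic_on ball z1 r"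
  proof (rule eventually_mono[OF ev_hol])
    fix b assume "holomorphic2_on (diff_quotient2 f b) N"
    then have "(\<lambda>z. diff_quotient2 f b (z, w1)) holomorphic_on ball z1 (2*r)"
      using slice_N holomorphic_on_slice1 by blast
    moreover have "cball z1 r \<subseteq> ball z1 (2*r)" using r by (auto simp: subset_eq)
    ultimately show "continuous_on (cball z1 r) (\<lambda>z. diff_quotient2 f b (z, w1))
          \<and> (\<lambda>z. diff_quotient2 f b (z, w1)) holomorphic_on ball z1 r"
      by (meson ball_subset_cball holomorphic_on_imp_continuous_on holomorphic_on_subset subset_trans)
  qed
  moreover have "uniform_limit (cball z1 r) (\<lambda>b z. diff_quotient2 f b (z, w1)) (\<lambda>z. deriv2 f (z, w1)) (at 0)"
    using ul r unfolding uniform_limit_iff K_def by (fastforce elim!: eventually_mono)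
  ultimately have "(\<lambda>z. deriv2 f (z, w1)) holomorphic_on ball z1 r"
    by (rule holomorphic_uniform_limit) simp_all
  then show "(\<lambda>z. deriv2 f (z, w1)) field_differentiable at z1"
    using r holomorphic_on_imp_differentiable_at by (metis centre_in_ball open_ball)
qed

lemma holomorphic2_on_deriv2:
  assumes f: "holomorphic2_on f S"
  shows "holomorphic2_on (deriv2 f) S"
proof (rule holomorphic2_onI)
  show "open S" using holomorphic2_onD(1)[OF f] .
  show "continuous_on S (deriv2 f)"
    by (rule continuous_at_imp_continuous_on) (metis deriv2_isCont_and_differentiable1(1)[OF f] prod.collapse)
  fix z w assume zw: "(z, w) \<in> S"
  show "(\<lambda>z'. deriv2 f (z', w)) field_differentiable at z"
    using deriv2_isCont_and_differentiable1(2)[OF f zw] .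
  obtain r where "r > 0" "cball z r \<times> cball w r \<subseteq> S"
    using cball_Times_subset_open[OF \<open>open S\<close> zw] by auto
  then have "(\<lambda>w'. f (z, w')) holomorphic_on ball w r"
    by (intro holomorphic_on_slice2[OF f]) auto
  then have "deriv (\<lambda>w'. f (z, w')) field_differentiable at w"
    using \<open>r > 0\<close> by (metis centre_in_ball holomorphic_deriv holomorphic_on_imp_differentiable_at open_ball)
  then show "(\<lambda>w'. deriv2 f (z, w')) field_differentiable at w" by (simp add: deriv2_def)
qed

lemma holomorphic2_on_swap:
  assumes f: "holomorphic2_on f S"
  shows "holomorphic2_on (f \<circ> prod.swap) (prod.swap -` S)"
proof (rule holomorphic2_onI)
  show "open (prod.swap -` S)"
    by (rule continuous_open_vimage[OF holomorphic2_onD(1)[OF f]]) (auto intro!: continuous_intros)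
  show "continuous_on (prod.swap -` S) (f \<circ> prod.swap)"
    by (rule continuous_on_compose) (auto intro!: continuous_intros continuous_on_subset[OF holomorphic2_onD(2)[OF f]])
qed (use holomorphic2_onD(3,4)[OF f] in auto)

lemma holomorphic2_on_deriv1:
  assumes f: "holomorphic2_on f S"
  shows "holomorphic2_on (deriv1 f) S"
proof -
  have "holomorphic2_on (deriv2 (f \<circ> prod.swap) \<circ> prod.swap) (prod.swap -` prod.swap -` S)"
    by (intro holomorphic2_on_swap holomorphic2_on_deriv2 f)
  moreover have "deriv2 (f \<circ> prod.swap) \<circ> prod.swap = deriv1 f"
    by (simp add: fun_eq_iff deriv1_def deriv2_def o_def)
  ultimately show ?thesis by (simp add: vimage_def)
qed

lemma holomorphic2_on_has_derivative:
  assumes f: "holomorphic2_on f S" and p: "p \<in> S"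
  shows "(f has_derivative (\<lambda>v. deriv1 f p * fst v + deriv2 f p * snd v)) (at p)"
proof -
  obtain z1 w1 where p_eq: "p = (z1, w1)" by fastforce
  obtain r where r: "r > 0" "cball z1 r \<times> cball w1 r \<subseteq> S"
    using cball_Times_subset_open[OF holomorphic2_onD(1)[OF f] p] by (auto simp: p_eq)
  have XY: "ball z1 r \<times> ball w1 r \<subseteq> S" using r(2) by (auto simp: subset_eq)
  have "((\<lambda>(x, y). f (x, y)) has_derivative
      (\<lambda>(tx, ty). deriv1 f p * tx + blinfun_mult_right (deriv2 f (z1, w1)) ty))
      (at (z1, w1) within ball z1 r \<times> ball w1 r)"
  proof (rule has_derivative_partialsI)
    show "((\<lambda>x. f (x, w1)) has_derivative (*) (deriv1 f p)) (at z1 within ball z1 r)"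
      using has_field_derivative_deriv1[OF f p[unfolded p_eq]]
      by (simp add: p_eq has_field_derivative_def has_derivative_at_withinI)
    fix x y assume "x \<in> ball z1 r" "y \<in> ball w1 r"
    then have "(x, y) \<in> S" using XY by blast
    from has_field_derivative_deriv2[OF f this]
    show "((\<lambda>y. f (x, y)) has_derivative blinfun_mult_right (deriv2 f (x, y))) (at y within ball w1 r)"
      by (simp add: has_field_derivative_def has_derivative_at_withinI)
  next
    have cont: "isCont (deriv2 f) (z1, w1)"
      using deriv2_isCont_and_differentiable1(1)[OF f p[unfolded p_eq]] .
    show "continuous (at (z1, w1) within ball z1 r \<times> ball w1 r)
        (\<lambda>(x, y). blinfun_mult_right (deriv2 f (x, y)))"
      using isCont_o2[OF cont linear_continuous_at[OF bounded_linear_blinfun_mult_right]]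
      by (simp add: split_beta' continuous_at_imp_continuous_at_within)
  qed (use r in auto)
  moreover have "at (z1, w1) within ball z1 r \<times> ball w1 r = at (z1, w1)"
    using r by (intro at_within_open) (auto simp: open_Times)
  ultimately show ?thesis
    by (simp add: p_eq split_beta' algebra_simps)
qed

lemma holomorphic2_onI_has_derivative:
  assumes S: "open S"
    and f: "\<And>p. p \<in> S \<Longrightarrow> \<exists>a b. (f has_derivative (\<lambda>v. a * fst v + b * snd v)) (at p)"
  shows "holomorphic2_on f S"
proof (rule holomorphic2_onI[OF S])
  show "continuous_on S f"
    using f by (meson continuous_at_imp_continuous_on has_derivative_continuous)
  fix z w assume "(z, w) \<in> S"
  then obtain a b where d: "(f has_derivative (\<lambda>v. a * fst v + b * snd v)) (at (z, w))"
    using f by blast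
  have "((\<lambda>z'. (z', w)) has_derivative (\<lambda>h. (h, 0))) (at z)"
    "((\<lambda>w'. (z, w')) has_derivative (\<lambda>h. (0, h))) (at w)"
    by (auto intro!: derivative_eq_intros)
  from this[THEN has_derivative_compose, OF d]
  show "(\<lambda>z'. f (z', w)) field_differentiable at z" "(\<lambda>w'. f (z, w')) field_differentiable at w"
    by (auto simp: field_differentiable_def has_field_derivative_def o_def mult.commute[of _ a] mult.commute[of _ b])
qed

lemma holomorphic2_on_if_holo2:
  assumes "holo2 f S" "open S"
  shows "holomorphic2_on f S"
  using assms by (intro holomorphic2_onI_has_derivative) (auto simp: holo2_def split_beta')

lemma has_field_derivative_compose2:
  assumes F: "holomorphic2_on F T" and g1: "(g1 has_field_derivative d1) (at z)"
    and g2: "(g2 has_field_derivative d2) (at z)" and T: "(g1 z, g2 z) \<in> T"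
  shows "((\<lambda>z. F (g1 z, g2 z)) has_field_derivative
           (deriv1 F (g1 z, g2 z) * d1 + deriv2 F (g1 z, g2 z) * d2)) (at z)"
proof -
  have "((\<lambda>z. (g1 z, g2 z)) has_derivative (\<lambda>h. (d1 * h, d2 * h))) (at z)"
    using has_derivative_Pair[OF g1[unfolded has_field_derivative_def] g2[unfolded has_field_derivative_def]] .
  from has_derivative_compose[OF this holomorphic2_on_has_derivative[OF F T]]
  show ?thesis
    unfolding has_field_derivative_def by (rule has_derivative_eq_rhs) (simp add: fun_eq_iff algebra_simps)
qed

lemma holomorphic2_on_compose2:
  assumes F: "holomorphic2_on F T" and f1: "holomorphic2_on f1 S" and f2: "holomorphic2_on f2 S"
    and T: "\<And>p. p \<in> S \<Longrightarrow> (f1 p, f2 p) \<in> T"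
  shows "holomorphic2_on (\<lambda>p. F (f1 p, f2 p)) S"
proof (rule holomorphic2_onI)
  show "open S" using holomorphic2_onD(1)[OF f1] .
  have "continuous_on S (\<lambda>p. (f1 p, f2 p))"
    using holomorphic2_onD(2)[OF f1] holomorphic2_onD(2)[OF f2] by (auto intro!: continuous_intros)
  then show "continuous_on S (\<lambda>p. F (f1 p, f2 p))"
    using holomorphic2_onD(2)[OF F] T by (auto intro!: continuous_on_compose2[of T F])
  fix z w assume zw: "(z, w) \<in> S"
  show "(\<lambda>z'. F (f1 (z', w), f2 (z', w))) field_differentiable at z"
    using has_field_derivative_compose2[OF F has_field_derivative_deriv1[OF f1 zw]
        has_field_derivative_deriv1[OF f2 zw]] T[OF zw] field_differentiable_def by auto
  show "(\<lambda>w'. F (f1 (z, w'), f2 (z, w'))) field_differentiable at w"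
    using has_field_derivative_compose2[OF F has_field_derivative_deriv2[OF f1 zw]
        has_field_derivative_deriv2[OF f2 zw]] T[OF zw] field_differentiable_def by auto
qed

section \<open>Integrals along segments\<close>

definition polydisc :: "real \<Rightarrow> (complex \<times> complex) set" where
  "polydisc r = ball 0 r \<times> ball 0 r"

lemma open_polydisc [simp]: "open (polydisc r)"
  by (simp add: polydisc_def open_Times)

lemma mem_polydisc: "p \<in> polydisc r \<longleftrightarrow> norm (fst p) < r \<and> norm (snd p) < r"
  by (cases p) (auto simp: polydisc_def)

lemma zero_in_polydisc [simp]: "r > 0 \<Longrightarrow> (0, 0) \<in> polydisc r"
  by (simp add: mem_polydisc)

lemma polydisc_mono: "r \<le> s \<Longrightarrow> polydisc r \<subseteq> polydisc s"
  by (auto simp: mem_polydisc)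

lemma polydisc_subset_ball: "polydisc (r/2) \<subseteq> ball 0 r"
proof
  fix p :: "complex \<times> complex" assume "p \<in> polydisc (r/2)"
  then have "norm (fst p) < r/2" "norm (snd p) < r/2" by (auto simp: mem_polydisc)
  moreover have "norm p \<le> norm (fst p) + norm (snd p)"
    using norm_Pair_le[of "fst p" "snd p"] by simp
  ultimately show "p \<in> ball 0 r" by simp
qed

lemma polydisc_subset_open:
  assumes "open T" "(0, 0) \<in> T"
  obtains r where "r > 0" "polydisc r \<subseteq> T"
proof -
  obtain r where "r > 0" "cball 0 r \<times> cball 0 r \<subseteq> T"
    using cball_Times_subset_open[OF assms] by auto
  moreover have "polydisc r \<subseteq> cball 0 r \<times> cball 0 r" by (auto simp: polydisc_def)
  ultimately show ?thesis using that by blast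
qed

lemma scale1_in_polydisc:
  assumes "(x, k) \<in> polydisc r" "t \<in> {0..1::real}"
  shows "(of_real t * x, k) \<in> polydisc r"
proof -
  have "norm (of_real t * x) \<le> norm x"
    using assms(2) by (simp add: norm_mult mult_left_le_one_le)
  then show ?thesis using assms(1) by (auto simp: mem_polydisc)
qed

lemma continuous_on_compose_polydisc:
  assumes "continuous_on (polydisc r) \<Phi>" "\<And>y. y \<in> X \<Longrightarrow> (m1 y, m2 y) \<in> polydisc r"
    "continuous_on X m1" "continuous_on X m2"
  shows "continuous_on X (\<lambda>y. \<Phi> (m1 y, m2 y))"
  by (rule continuous_on_compose2[OF assms(1)]) (use assms(2-) in \<open>auto intro!: continuous_intros\<close>)

definition segment_mean1 :: "(complex \<times> complex \<Rightarrow> complex) \<Rightarrow> complex \<times> complex \<Rightarrow> complex" where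
  "segment_mean1 \<Phi> p = integral {0..1} (\<lambda>t. \<Phi> (of_real t * fst p, snd p))"

lemma has_field_derivative_segment_mean1_fst:
  assumes \<Phi>: "holomorphic2_on \<Phi> (polydisc r)" and xk: "(x, k) \<in> polydisc r"
  shows "((\<lambda>x. segment_mean1 \<Phi> (x, k)) has_field_derivative
           integral {0..1} (\<lambda>t. of_real t * deriv1 \<Phi> (of_real t * x, k))) (at x)"
proof -
  have k: "norm k < r" and x: "x \<in> ball 0 r" using xk by (auto simp: mem_polydisc)
  have inP: "(y, k) \<in> polydisc r" if "y \<in> ball 0 r" for y using that k by (simp add: mem_polydisc)
  have mem: "(of_real t * y, k) \<in> polydisc r" if "y \<in> ball 0 r" "t \<in> cbox 0 1" for y t
    using scale1_in_polydisc[OF inP[OF that(1)]] that(2) by simp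
  have "((\<lambda>x. integral (cbox 0 1) (\<lambda>t. \<Phi> (of_real t * x, k))) has_field_derivative
        integral (cbox 0 1) (\<lambda>t. of_real t * deriv1 \<Phi> (of_real t * x, k))) (at x within ball 0 r)"
  proof (rule leibniz_rule_field_derivative)
    fix y :: complex and t :: real assume y: "y \<in> ball 0 r" and t: "t \<in> cbox 0 1"
    have "((\<lambda>x. \<Phi> (of_real t * x, k)) has_field_derivative
        deriv1 \<Phi> (of_real t * y, k) * of_real t + deriv2 \<Phi> (of_real t * y, k) * 0) (at y)"
      by (rule has_field_derivative_compose2[OF \<Phi>])
        (use mem[OF y t] in \<open>auto intro!: derivative_eq_intros\<close>)
    then show "((\<lambda>x. \<Phi> (of_real t * x, k)) has_field_derivative
        of_real t * deriv1 \<Phi> (of_real t * y, k)) (at y within ball 0 r)"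
      by (simp add: mult.commute has_field_derivative_at_within)
  next
    fix y :: complex assume y: "y \<in> ball 0 r"
    show "(\<lambda>t. \<Phi> (of_real t * y, k)) integrable_on cbox 0 1"
      by (intro integrable_continuous continuous_on_compose_polydisc[OF holomorphic2_onD(2)[OF \<Phi>]])
        (auto intro!: continuous_intros mem[OF y])
  next
    have "continuous_on (ball 0 r \<times> cbox 0 1) (\<lambda>z. deriv1 \<Phi> (of_real (snd z) * fst z, k))"
      by (rule continuous_on_compose_polydisc[OF holomorphic2_onD(2)[OF holomorphic2_on_deriv1[OF \<Phi>]]])
        (auto intro!: continuous_intros mem)
    then have "continuous_on (ball 0 r \<times> cbox 0 1) (\<lambda>z. of_real (snd z) * deriv1 \<Phi> (of_real (snd z) * fst z, k))"
      by (intro continuous_intros)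
    then show "continuous_on (ball 0 r \<times> cbox 0 1) (\<lambda>(x, t). of_real t * deriv1 \<Phi> (of_real t * x, k))"
      by (simp add: split_beta')
  qed (use x in auto)
  then show ?thesis
    using at_within_open[OF x open_ball] by (simp add: segment_mean1_def)
qed

lemma has_field_derivative_segment_mean1_snd:
  assumes \<Phi>: "holomorphic2_on \<Phi> (polydisc r)" and xk: "(x, k) \<in> polydisc r"
  shows "((\<lambda>k. segment_mean1 \<Phi> (x, k)) has_field_derivative
           segment_mean1 (deriv2 \<Phi>) (x, k)) (at k)"
proof -
  have x: "norm x < r" and k: "k \<in> ball 0 r" using xk by (auto simp: mem_polydisc)
  have inP: "(x, y) \<in> polydisc r" if "y \<in> ball 0 r" for y using that x by (simp add: mem_polydisc)
  have mem: "(of_real t * x, y) \<in> polydisc r" if "y \<in> ball 0 r" "t \<in> cbox 0 1" for y t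
    using scale1_in_polydisc[OF inP[OF that(1)]] that(2) by simp
  have "((\<lambda>k. integral (cbox 0 1) (\<lambda>t. \<Phi> (of_real t * x, k))) has_field_derivative
        integral (cbox 0 1) (\<lambda>t. deriv2 \<Phi> (of_real t * x, k))) (at k within ball 0 r)"
  proof (rule leibniz_rule_field_derivative)
    fix y :: complex and t :: real assume y: "y \<in> ball 0 r" and t: "t \<in> cbox 0 1"
    have "((\<lambda>k. \<Phi> (of_real t * x, k)) has_field_derivative
        deriv1 \<Phi> (of_real t * x, y) * 0 + deriv2 \<Phi> (of_real t * x, y) * 1) (at y)"
      by (rule has_field_derivative_compose2[OF \<Phi>])
        (use mem[OF y t] in \<open>auto intro!: derivative_eq_intros\<close>)
    then show "((\<lambda>k. \<Phi> (of_real t * x, k)) has_field_derivative deriv2 \<Phi> (of_real t * x, y))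
        (at y within ball 0 r)"
      by (simp add: has_field_derivative_at_within)
  next
    fix y :: complex assume y: "y \<in> ball 0 r"
    show "(\<lambda>t. \<Phi> (of_real t * x, y)) integrable_on cbox 0 1"
      by (intro integrable_continuous continuous_on_compose_polydisc[OF holomorphic2_onD(2)[OF \<Phi>]])
        (auto intro!: continuous_intros mem[OF y])
  next
    have "continuous_on (ball 0 r \<times> cbox 0 1) (\<lambda>z. deriv2 \<Phi> (of_real (snd z) * x, fst z))"
      by (rule continuous_on_compose_polydisc[OF holomorphic2_onD(2)[OF holomorphic2_on_deriv2[OF \<Phi>]]])
        (auto intro!: continuous_intros mem)
    then show "continuous_on (ball 0 r \<times> cbox 0 1) (\<lambda>(k, t). deriv2 \<Phi> (of_real t * x, k))"
      by (simp add: split_beta')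
  qed (use k in auto)
  then show ?thesis
    using at_within_open[OF k open_ball] by (simp add: segment_mean1_def)
qed

lemma holomorphic2_on_segment_mean1:
  assumes \<Phi>: "holomorphic2_on \<Phi> (polydisc r)"
  shows "holomorphic2_on (segment_mean1 \<Phi>) (polydisc r)"
proof (rule holomorphic2_onI)
  have "continuous_on (polydisc r \<times> cbox 0 1) (\<lambda>z. \<Phi> (of_real (snd z) * fst (fst z), snd (fst z)))"
    by (rule continuous_on_compose_polydisc[OF holomorphic2_onD(2)[OF \<Phi>]])
      (auto intro!: continuous_intros scale1_in_polydisc)
  then have "continuous_on (polydisc r \<times> cbox 0 1) (\<lambda>(p, t). \<Phi> (of_real t * fst p, snd p))"
    by (simp add: split_beta')
  from integral_continuous_on_param[OF this]
  show "continuous_on (polydisc r) (segment_mean1 \<Phi>)"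
    by (simp add: segment_mean1_def[abs_def] split_beta')
next
  fix z w assume zw: "(z, w) \<in> polydisc r"
  show "(\<lambda>z'. segment_mean1 \<Phi> (z', w)) field_differentiable at z"
    using has_field_derivative_segment_mean1_fst[OF \<Phi> zw] field_differentiable_def by blast
  show "(\<lambda>w'. segment_mean1 \<Phi> (z, w')) field_differentiable at w"
    using has_field_derivative_segment_mean1_snd[OF \<Phi> zw] field_differentiable_def by blast
qed simp

lemma holomorphic2_hadamard:
  assumes \<Phi>: "holomorphic2_on \<Phi> (polydisc r)" and xk: "(x, k) \<in> polydisc r"
  shows "\<Phi> (x, k) = \<Phi> (0, k) + x * segment_mean1 (deriv1 \<Phi>) (x, k)"
proof -
  have "((\<lambda>t. deriv1 \<Phi> (of_real t * x, k) * x) has_integral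
      \<Phi> (of_real 1 * x, k) - \<Phi> (of_real 0 * x, k)) {0..1}"
  proof (rule fundamental_theorem_of_calculus)
    fix t :: real assume t: "t \<in> {0..1}"
    have "((\<lambda>z. \<Phi> (z * x, k)) has_field_derivative
        deriv1 \<Phi> (of_real t * x, k) * x + deriv2 \<Phi> (of_real t * x, k) * 0) (at (of_real t))"
      by (rule has_field_derivative_compose2[OF \<Phi>])
        (auto intro!: derivative_eq_intros scale1_in_polydisc[OF xk t])
    then show "((\<lambda>t. \<Phi> (of_real t * x, k)) has_vector_derivative deriv1 \<Phi> (of_real t * x, k) * x)
        (at t within {0..1})"
      using has_vector_derivative_real_field by fastforce
  qed simp
  from integral_unique[OF this]
  show ?thesis by (simp add: segment_mean1_def integral_mult_left mult.commute)
qed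

lemma deriv1_mult_segment_mean1:
  assumes g: "holomorphic2_on g (polydisc r)" and xk: "(x, k) \<in> polydisc r"
  shows "deriv1 (\<lambda>p. fst p * segment_mean1 g p) (x, k) = g (x, k)"
proof -
  let ?I = "integral {0..1} (\<lambda>t. of_real t * deriv1 g (of_real t * x, k))"
  from DERIV_mult[OF DERIV_ident has_field_derivative_segment_mean1_fst[OF g xk]]
  have "deriv1 (\<lambda>p. fst p * segment_mean1 g p) (x, k) = segment_mean1 g (x, k) + x * ?I"
    by (simp add: deriv1_eqI mult.commute)
  also have "\<dots> = g (x, k)"
  proof -
    let ?f = "\<lambda>t. g (of_real t * x, k)" and ?h = "\<lambda>t. of_real t * deriv1 g (of_real t * x, k)"
    have "((\<lambda>t. ?f t + ?h t * x) has_integral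
        of_real 1 * g (of_real 1 * x, k) - of_real 0 * g (of_real 0 * x, k)) {0..1}"
    proof (rule fundamental_theorem_of_calculus)
      fix t :: real assume t: "t \<in> {0..1}"
      have "((\<lambda>z. g (z * x, k)) has_field_derivative
          deriv1 g (of_real t * x, k) * x + deriv2 g (of_real t * x, k) * 0) (at (of_real t))"
        by (rule has_field_derivative_compose2[OF g])
          (auto intro!: derivative_eq_intros scale1_in_polydisc[OF xk t])
      then have "((\<lambda>z. z * g (z * x, k)) has_field_derivative ?f t + ?h t * x) (at (of_real t))"
        by (auto intro!: derivative_eq_intros simp: algebra_simps)
      then show "((\<lambda>t. of_real t * g (of_real t * x, k)) has_vector_derivative ?f t + ?h t * x)
          (at t within {0..1})"
        using has_vector_derivative_real_field by fastforce
    qed simp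
    then have "((\<lambda>t. ?f t + ?h t * x) has_integral g (x, k)) {0..1}" by simp
    moreover have "continuous_on {0..1} ?f" "continuous_on {0..1} (\<lambda>t. deriv1 g (of_real t * x, k))"
      by (rule continuous_on_compose_polydisc[OF holomorphic2_onD(2)[OF g]]
          continuous_on_compose_polydisc[OF holomorphic2_onD(2)[OF holomorphic2_on_deriv1[OF g]]];
          auto intro!: continuous_intros scale1_in_polydisc[OF xk])+
    then have "?f integrable_on {0..1}" "?h integrable_on {0..1}"
      by (auto intro!: integrable_continuous_interval continuous_intros)
    then have "((\<lambda>t. ?f t + ?h t * x) has_integral integral {0..1} ?f + integral {0..1} ?h * x) {0..1}"
      by (intro has_integral_add has_integral_mult_left integrable_integral)
    ultimately show ?thesis
      by (simp add: segment_mean1_def has_integral_unique mult.commute)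
  qed
  finally show ?thesis .
qed

section \<open>Local inversion\<close>

definition linmap :: "complex \<Rightarrow> complex \<Rightarrow> complex \<Rightarrow> complex \<Rightarrow> complex \<times> complex \<Rightarrow> complex \<times> complex" where
  "linmap a b c d = (\<lambda>(x, y). (a * x + b * y, c * x + d * y))"

lemma linmap_apply: "linmap a b c d v = (a * fst v + b * snd v, c * fst v + d * snd v)"
  by (simp add: linmap_def split_beta)

lemma bounded_linear_linmap: "bounded_linear (linmap a b c d)"
  unfolding linmap_apply[abs_def]
  by (intro bounded_linear_Pair bounded_linear_add
      bounded_linear_compose[OF bounded_linear_mult_right bounded_linear_fst]
      bounded_linear_compose[OF bounded_linear_mult_right bounded_linear_snd])

lemma linmap_inverse:
  assumes "D = a * d - b * c" "D \<noteq> 0"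
  shows "linmap (d/D) (-b/D) (-c/D) (a/D) \<circ> linmap a b c d = id"
    "linmap a b c d \<circ> linmap (d/D) (-b/D) (-c/D) (a/D) = id"
proof -
  have "a * (d * x) = D * x + b * (c * x)" for x
    unfolding assms(1) by (simp add: algebra_simps)
  then show "linmap (d/D) (-b/D) (-c/D) (a/D) \<circ> linmap a b c d = id"
    "linmap a b c d \<circ> linmap (d/D) (-b/D) (-c/D) (a/D) = id"
    using assms(2) by (auto simp: fun_eq_iff linmap_apply field_simps)
qed

lemma inv_linmap:
  assumes "D = a * d - b * c" "D \<noteq> 0"
  shows "inv (linmap a b c d) = linmap (d/D) (-b/D) (-c/D) (a/D)"
  using linmap_inverse[OF assms] by (intro inv_unique_comp)

lemma det_nonzero_if_bij_linmap:
  assumes "bij (linmap a b c d)"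
  shows "a * d - b * c \<noteq> 0"
proof
  assume det: "a * d - b * c = 0"
  show False
  proof (cases "a = 0 \<and> b = 0")
    case True
    then have "(1, 0) \<notin> range (linmap a b c d)" by (auto simp: linmap_apply)
    then show False using assms bij_is_surj by blast
  next
    case False
    have "linmap a b c d (b, -a) = linmap a b c d 0"
      using det by (auto simp: linmap_apply algebra_simps)
    moreover have "(b, -a) \<noteq> 0" using False by (auto simp: prod_eq_iff)
    ultimately show False using assms bij_is_inj by (metis injD)
  qed
qed

lemma holomorphic2_on_pair_has_derivative:
  assumes "holomorphic2_on f1 S" "holomorphic2_on f2 S" "q \<in> S"
  shows "((\<lambda>q. (f1 q, f2 q)) has_derivative
           linmap (deriv1 f1 q) (deriv2 f1 q) (deriv1 f2 q) (deriv2 f2 q)) (at q)"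
  using has_derivative_Pair[OF holomorphic2_on_has_derivative[OF assms(1,3)]
      holomorphic2_on_has_derivative[OF assms(2,3)]]
  by (simp add: linmap_apply[abs_def])

lemma holomorphic2_on_components_if_has_derivative_linmap:
  assumes V: "open V"
    and g: "\<And>y. y \<in> V \<Longrightarrow> \<exists>a b c d. (g has_derivative linmap a b c d) (at y)"
  shows "holomorphic2_on (\<lambda>y. fst (g y)) V" "holomorphic2_on (\<lambda>y. snd (g y)) V"
proof (rule_tac [!] holomorphic2_onI_has_derivative[OF V])
  fix y assume "y \<in> V"
  then obtain a b c d where "(g has_derivative linmap a b c d) (at y)" using g by blast
  from has_derivative_fst[OF this] has_derivative_snd[OF this]
  show "\<exists>a b. ((\<lambda>y. fst (g y)) has_derivative (\<lambda>v. a * fst v + b * snd v)) (at y)"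
    "\<exists>a b. ((\<lambda>y. snd (g y)) has_derivative (\<lambda>v. a * fst v + b * snd v)) (at y)"
    unfolding linmap_apply fst_conv snd_conv by blast+
qed

lemma holomorphic2_local_homeomorphism:
  assumes f1: "holomorphic2_on f1 S" and f2: "holomorphic2_on f2 S" and p: "p \<in> S"
    and det: "jacobian2 f1 f2 p \<noteq> 0"
  defines "L \<equiv> \<lambda>q. linmap (deriv1 f1 q) (deriv2 f1 q) (deriv1 f2 q) (deriv2 f2 q)"
  obtains U V g where "open U" "U \<subseteq> S" "p \<in> U" "open V" "(f1 p, f2 p) \<in> V"
    "homeomorphism U V (\<lambda>q. (f1 q, f2 q)) g"
    "\<And>y. y \<in> V \<Longrightarrow> (g has_derivative inv (L (g y))) (at y)" "\<And>y. y \<in> V \<Longrightarrow> bij (L (g y))"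
proof -
  define D where "D = jacobian2 f1 f2 p"
  define Linv where "Linv = linmap (deriv2 f2 p / D) (- deriv2 f1 p / D) (- deriv1 f2 p / D) (deriv1 f1 p / D)"
  have L_apply: "blinfun_apply (Blinfun (L q)) = L q" for q
    by (simp add: L_def bounded_linear_Blinfun_apply bounded_linear_linmap)
  have Linv_apply: "blinfun_apply (Blinfun Linv) = Linv"
    by (simp add: Linv_def bounded_linear_Blinfun_apply bounded_linear_linmap)
  show ?thesis
  proof (rule inverse_function_theorem[of S "\<lambda>q. (f1 q, f2 q)" "\<lambda>q. Blinfun (L q)" p "Blinfun Linv"],
      unfold L_apply)
    show "open S" using holomorphic2_onD(1)[OF f1] .
    show "\<And>x. x \<in> S \<Longrightarrow> ((\<lambda>q. (f1 q, f2 q)) has_derivative L x) (at x)"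
      unfolding L_def by (rule holomorphic2_on_pair_has_derivative[OF f1 f2])
    show "continuous_on S (\<lambda>q. Blinfun (L q))"
    proof (rule continuous_on_blinfun_componentwise)
      fix v :: "complex \<times> complex"
      show "continuous_on S (\<lambda>q. blinfun_apply (Blinfun (L q)) v)"
        unfolding L_apply unfolding L_def linmap_apply
        using holomorphic2_onD(2)[OF holomorphic2_on_deriv1[OF f1]] holomorphic2_onD(2)[OF holomorphic2_on_deriv2[OF f1]]
          holomorphic2_onD(2)[OF holomorphic2_on_deriv1[OF f2]] holomorphic2_onD(2)[OF holomorphic2_on_deriv2[OF f2]]
        by (auto intro!: continuous_intros)
    qed
    show "Blinfun Linv o\<^sub>L Blinfun (L p) = id_blinfun"
    proof (rule blinfun_eqI)
      fix v
      have "D = deriv1 f1 p * deriv2 f2 p - deriv2 f1 p * deriv1 f2 p" "D \<noteq> 0"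
        using det by (simp_all add: D_def jacobian2_def)
      from fun_cong[OF linmap_inverse(1)[OF this], of v]
      show "blinfun_apply (Blinfun Linv o\<^sub>L Blinfun (L p)) v = blinfun_apply id_blinfun v"
        unfolding blinfun_apply_blinfun_compose Linv_apply L_apply by (simp add: L_def Linv_def)
    qed
  qed (use p that in auto)
qed

lemma holomorphic2_inverse_function:
  assumes f1: "holomorphic2_on f1 S" and f2: "holomorphic2_on f2 S" and p: "p \<in> S"
    and det: "jacobian2 f1 f2 p \<noteq> 0"
  obtains U V g where "open U" "U \<subseteq> S" "p \<in> U" "open V" "(f1 p, f2 p) \<in> V"
    "homeomorphism U V (\<lambda>q. (f1 q, f2 q)) g"
    "\<And>y. y \<in> V \<Longrightarrow> jacobian2 f1 f2 (g y) \<noteq> 0"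
    "holomorphic2_on (\<lambda>y. fst (g y)) V" "holomorphic2_on (\<lambda>y. snd (g y)) V"
proof -
  let ?L = "\<lambda>q. linmap (deriv1 f1 q) (deriv2 f1 q) (deriv1 f2 q) (deriv2 f2 q)"
  obtain U V g where UV: "open U" "U \<subseteq> S" "p \<in> U" "open V" "(f1 p, f2 p) \<in> V"
      "homeomorphism U V (\<lambda>q. (f1 q, f2 q)) g"
    and g: "\<And>y. y \<in> V \<Longrightarrow> (g has_derivative inv (?L (g y))) (at y)" "\<And>y. y \<in> V \<Longrightarrow> bij (?L (g y))"
    using holomorphic2_local_homeomorphism[OF f1 f2 p det] by blast
  have jac: "jacobian2 f1 f2 (g y) \<noteq> 0" if "y \<in> V" for y
    using det_nonzero_if_bij_linmap[OF g(2)[OF that]] by (simp add: jacobian2_def)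
  have "\<exists>a b c d. (g has_derivative linmap a b c d) (at y)" if "y \<in> V" for y
    using g(1)[OF that] inv_linmap[OF _ jac[OF that, unfolded jacobian2_def]] by (auto simp: jacobian2_def)
  then have "holomorphic2_on (\<lambda>y. fst (g y)) V" "holomorphic2_on (\<lambda>y. snd (g y)) V"
    using holomorphic2_on_components_if_has_derivative_linmap[OF \<open>open V\<close>] by blast+
  with UV jac show ?thesis using that by blast
qed

lemma symplectic_chart_if_jacobian2_eq_1:
  assumes u1: "holomorphic2_on u1 W" and u2: "holomorphic2_on u2 W" and p: "p \<in> W"
    and jac: "\<And>q. q \<in> W \<Longrightarrow> jacobian2 u1 u2 q = 1"
  obtains U where "p \<in> U" "U \<subseteq> W" "symplectic_chart (\<lambda>q. (u1 q, u2 q)) U"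
proof -
  obtain U V h where U: "open U" "U \<subseteq> W" "p \<in> U" and hom: "homeomorphism U V (\<lambda>q. (u1 q, u2 q)) h"
    by (rule holomorphic2_inverse_function[OF u1 u2 p]) (auto simp: jac[OF p])
  have "inj_on (\<lambda>q. (u1 q, u2 q)) U"
    using homeomorphism_apply1[OF hom] by (rule inj_on_inverseI)
  moreover have "\<exists>a b c d. ((\<lambda>q. (u1 q, u2 q)) has_derivative
      (\<lambda>(x, y). (a * x + b * y, c * x + d * y))) (at z) \<and> a * d - b * c = 1" if "z \<in> U" for z
  proof (intro exI conjI)
    have z: "z \<in> W" using that U(2) by blast
    show "((\<lambda>q. (u1 q, u2 q)) has_derivative (\<lambda>(x, y). (deriv1 u1 z * x + deriv2 u1 z * y,
        deriv1 u2 z * x + deriv2 u2 z * y))) (at z)"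
      using holomorphic2_on_pair_has_derivative[OF u1 u2 z] by (simp add: linmap_def)
    show "deriv1 u1 z * deriv2 u2 z - deriv2 u1 z * deriv1 u2 z = 1"
      using jac[OF z] by (simp add: jacobian2_def)
  qed
  ultimately show ?thesis
    using that U by (auto simp: symplectic_chart_def)
qed

section \<open>The normal form\<close>

lemma analytic_local_inverse:
  fixes G :: "complex \<Rightarrow> complex"
  assumes G: "G analytic_on {0}" and "deriv G 0 \<noteq> 0"
  obtains \<rho> Gi where "\<rho> > 0" "G holomorphic_on ball 0 \<rho>" "open (G ` ball 0 \<rho>)"
    "Gi holomorphic_on G ` ball 0 \<rho>" "\<And>z. z \<in> ball 0 \<rho> \<Longrightarrow> Gi (G z) = z"
proof -
  obtain \<rho>0 where \<rho>0: "\<rho>0 > 0" "G holomorphic_on ball 0 \<rho>0"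
    using G unfolding analytic_on_def by blast
  obtain \<rho> where \<rho>: "\<rho> > 0" "ball (0::complex) \<rho> \<subseteq> ball 0 \<rho>0" "inj_on G (ball 0 \<rho>)"
    using has_complex_derivative_locally_injective[OF \<rho>0(2) _ open_ball \<open>deriv G 0 \<noteq> 0\<close>] \<rho>0(1)
    by (metis centre_in_ball)
  have hol: "G holomorphic_on ball 0 \<rho>" using holomorphic_on_subset[OF \<rho>0(2) \<rho>(2)] .
  obtain Gi where "Gi holomorphic_on G ` ball 0 \<rho>" "\<And>z. z \<in> ball 0 \<rho> \<Longrightarrow> Gi (G z) = z"
    using holomorphic_has_inverse[OF hol open_ball \<rho>(3)] by metis
  with \<rho>(1) hol open_mapping_thm3[OF hol open_ball \<rho>(3)] show ?thesis using that by blast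
qed

lemma holomorphic2_factor_through_local_biholomorphism:
  fixes G :: "complex \<Rightarrow> complex"
  assumes G: "G analytic_on {0}" "G 0 = 0" "deriv G 0 \<noteq> 0"
    and \<phi>: "holomorphic2_on \<phi> (polydisc r)" "r > 0" and \<phi>0: "\<And>h. (0, h) \<in> polydisc r \<Longrightarrow> \<phi> (0, h) = G h"
  obtains s E where "s > 0" "holomorphic2_on E (polydisc s)"
    "\<And>x h. (x, h) \<in> polydisc s \<Longrightarrow> \<phi> (x, h) = G (h + x * E (x, h))"
proof -
  obtain \<rho> Gi where \<rho>: "\<rho> > 0" "G holomorphic_on ball 0 \<rho>" "open (G ` ball 0 \<rho>)"
    and Gi: "Gi holomorphic_on G ` ball 0 \<rho>" "\<And>z. z \<in> ball 0 \<rho> \<Longrightarrow> Gi (G z) = z"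
    using analytic_local_inverse[OF G(1,3)] by blast
  have "open (polydisc r \<inter> \<phi> -` G ` ball 0 \<rho>)"
    using holomorphic2_onD(2)[OF \<phi>(1)] \<rho>(3) by (intro continuous_open_preimage) auto
  moreover have "(0, 0) \<in> polydisc r \<inter> \<phi> -` G ` ball 0 \<rho>"
    using \<phi>0[of 0] \<phi>(2) \<rho>(1) G(2) by (auto simp: rev_image_eqI)
  ultimately obtain s0 where "s0 > 0" "polydisc s0 \<subseteq> \<phi> -` G ` ball 0 \<rho>"
    by (rule polydisc_subset_open) blast
  moreover define s where "s = min s0 (min r \<rho>)"
  ultimately have s: "s > 0" "polydisc s \<subseteq> \<phi> -` G ` ball 0 \<rho>" and s_r: "polydisc s \<subseteq> polydisc r"
    and s_le: "s \<le> r" "s \<le> \<rho>"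
    using \<phi>(2) \<rho>(1) polydisc_mono[of s s0] polydisc_mono[of s r] by auto
  define K where "K p = Gi (\<phi> p)" for p
  have K: "holomorphic2_on K (polydisc s)"
    unfolding K_def using s(2) holomorphic2_on_subset[OF \<phi>(1) open_polydisc s_r]
    by (intro holomorphic2_on_compose[OF _ Gi(1) \<rho>(3)]) auto
  show ?thesis
  proof (rule that[OF s(1) holomorphic2_on_segment_mean1[OF holomorphic2_on_deriv1[OF K]]])
    fix x h assume xh: "(x, h) \<in> polydisc s"
    then have "(0, h) \<in> polydisc s" using s(1) by (simp add: mem_polydisc)
    then have "(0, h) \<in> polydisc r" "norm h < \<rho>" using s_le by (auto simp: mem_polydisc)
    then have "K (0, h) = h" using Gi(2) \<phi>0 by (simp add: K_def)
    then have "K (x, h) = h + x * segment_mean1 (deriv1 K) (x, h)"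
      using holomorphic2_hadamard[OF K xh] by simp
    moreover have "G (K (x, h)) = \<phi> (x, h)" using xh s(2) Gi(2) by (auto simp: K_def)
    ultimately show "\<phi> (x, h) = G (h + x * segment_mean1 (deriv1 K) (x, h))" by simp
  qed
qed

lemma hamiltonian_eq_G_of_sheared_product:
  fixes H :: "complex \<times> complex \<Rightarrow> complex" and G :: "complex \<Rightarrow> complex"
    and \<Delta> :: "complex \<times> complex \<Rightarrow> complex"
  assumes G: "G analytic_on {0}" "G 0 = 0" "deriv G 0 \<noteq> 0" and \<Delta>: "analytic_germ2 \<Delta>"
    and H: "\<exists>r>0. \<forall>y\<in>ball 0 r. H y = G (fst y * snd y) + fst y * \<Delta> (fst y, fst y * snd y)"
  obtains N r E where "open N" "0 \<in> N" "r > 0" "holomorphic2_on E (polydisc r)"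
    "\<And>y. y \<in> N \<Longrightarrow> (fst y, fst y * snd y) \<in> polydisc r"
    "\<And>y. y \<in> N \<Longrightarrow> H y = G (fst y * (snd y + E (fst y, fst y * snd y)))"
proof -
  obtain rH where rH: "rH > 0" "\<And>y. y \<in> ball 0 rH \<Longrightarrow> H y = G (fst y * snd y) + fst y * \<Delta> (fst y, fst y * snd y)"
    using H by blast
  obtain r\<Delta> where r\<Delta>: "r\<Delta> > 0" "holo2 \<Delta> (ball 0 r\<Delta>)"
    using \<Delta> unfolding analytic_germ2_def by blast
  obtain \<rho> where \<rho>: "\<rho> > 0" "G holomorphic_on ball 0 \<rho>"
    using G(1) unfolding analytic_on_def by blast
  define r where "r = min (r\<Delta>/2) \<rho>"
  have r: "r > 0" using r\<Delta>(1) \<rho>(1) by (simp add: r_def)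
  have "polydisc r \<subseteq> polydisc (r\<Delta>/2)" by (rule polydisc_mono) (simp add: r_def)
  then have "polydisc r \<subseteq> ball 0 r\<Delta>" using polydisc_subset_ball[of r\<Delta>] by blast
  then have \<Delta>r: "holomorphic2_on \<Delta> (polydisc r)"
    using holomorphic2_on_subset[OF holomorphic2_on_if_holo2[OF r\<Delta>(2) open_ball]] by simp
  have \<phi>: "holomorphic2_on (\<lambda>p. G (snd p) + fst p * \<Delta> p) (polydisc r)"
    by (intro holomorphic2_on_add holomorphic2_on_mult holomorphic2_on_fst \<Delta>r open_polydisc
        holomorphic2_on_compose[OF holomorphic2_on_snd \<rho>(2) open_ball]) (auto simp: mem_polydisc r_def)
  obtain s E where s: "s > 0" "holomorphic2_on E (polydisc s)"
    and E: "\<And>x h. (x, h) \<in> polydisc s \<Longrightarrow> G h + x * \<Delta> (x, h) = G (h + x * E (x, h))"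
    by (rule holomorphic2_factor_through_local_biholomorphism[OF G \<phi> r]) (auto intro: that)
  define N where "N = ball 0 rH \<inter> (\<lambda>y. (fst y, fst y * snd y)) -` polydisc s"
  show ?thesis
  proof (rule that[OF _ _ s])
    show "open N"
      unfolding N_def by (intro open_Int continuous_open_vimage) (auto intro!: continuous_intros)
    show "0 \<in> N" using rH(1) s(1) by (simp add: N_def zero_prod_def)
    fix y assume "y \<in> N"
    then show "(fst y, fst y * snd y) \<in> polydisc s" "H y = G (fst y * (snd y + E (fst y, fst y * snd y)))"
      using rH(2) E by (auto simp: N_def algebra_simps)
  qed
qed

lemma jacobian2_fst_shear:
  assumes E: "holomorphic2_on E S" and p: "p \<in> S"
  shows "jacobian2 fst (\<lambda>p. snd p + fst p * E p) p = 1 + fst p * deriv2 E p"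
proof -
  obtain x h where p_eq: "p = (x, h)" by fastforce
  have "((\<lambda>h'. h' + x * E (x, h')) has_field_derivative 1 + x * deriv2 E (x, h)) (at h)"
    using has_field_derivative_deriv2[OF E p[unfolded p_eq]] by (auto intro!: derivative_eq_intros)
  then show ?thesis by (simp add: jacobian2_def p_eq deriv1_def deriv2_eqI)
qed

lemma shear_local_inverse:
  assumes E: "holomorphic2_on E (polydisc r)" and r: "r > 0"
  obtains U V \<eta> where "open U" "U \<subseteq> polydisc r" "(0, 0) \<in> U" "open V" "(0, 0) \<in> V"
    "holomorphic2_on \<eta> V"
    "\<And>q. q \<in> U \<Longrightarrow> (fst q, snd q + fst q * E q) \<in> V \<and> \<eta> (fst q, snd q + fst q * E q) = snd q"
    "\<And>y. y \<in> V \<Longrightarrow> (fst y, \<eta> y) \<in> polydisc r \<and> 1 + fst y * deriv2 E (fst y, \<eta> y) \<noteq> 0"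
proof -
  define f where "f p = snd p + fst p * E p" for p
  have f: "holomorphic2_on f (polydisc r)"
    unfolding f_def[abs_def]
    by (intro holomorphic2_on_add holomorphic2_on_mult holomorphic2_on_fst holomorphic2_on_snd E open_polydisc)
  have jac: "jacobian2 fst f p = 1 + fst p * deriv2 E p" if "p \<in> polydisc r" for p
    unfolding f_def[abs_def] by (rule jacobian2_fst_shear[OF E that])
  obtain U V g where U: "open U" "U \<subseteq> polydisc r" "(0, 0) \<in> U" and V: "open V" "(0, 0) \<in> V"
    and hom: "homeomorphism U V (\<lambda>q. (fst q, f q)) g"
    and jac_g: "\<And>y. y \<in> V \<Longrightarrow> jacobian2 fst f (g y) \<noteq> 0"
    and \<eta>: "holomorphic2_on (\<lambda>y. snd (g y)) V"
  proof (rule holomorphic2_inverse_function[OF holomorphic2_on_fst[OF open_polydisc] f zero_in_polydisc[OF r]])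
    show "jacobian2 fst f (0, 0) \<noteq> 0" using jac[OF zero_in_polydisc[OF r]] by simp
    fix U V g assume "open U" "U \<subseteq> polydisc r" "(0, 0) \<in> U" "open V" "(fst (0, 0), f (0, 0)) \<in> V"
      "homeomorphism U V (\<lambda>q. (fst q, f q)) g" "\<And>y. y \<in> V \<Longrightarrow> jacobian2 fst f (g y) \<noteq> 0"
      "holomorphic2_on (\<lambda>y. snd (g y)) V"
    then show thesis using that by (simp add: f_def)
  qed
  have g: "g y = (fst y, snd (g y))" "g y \<in> polydisc r" if "y \<in> V" for y
    using homeomorphism_apply2[OF hom that] homeomorphism_image2[OF hom] that U(2)
    by (metis fst_conv prod.collapse, blast)
  show ?thesis
  proof (rule that[OF U V \<eta>])
    fix q assume q: "q \<in> U"
    have "(fst q, f q) \<in> V" using homeomorphism_image1[OF hom] q by blast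
    moreover have "g (fst q, f q) = q" using homeomorphism_apply1[OF hom q] .
    ultimately show "(fst q, snd q + fst q * E q) \<in> V \<and> snd (g (fst q, snd q + fst q * E q)) = snd q"
      by (simp add: f_def)
  next
    fix y assume y: "y \<in> V"
    obtain e where ge: "g y = (fst y, e)" using g(1)[OF y] by blast
    show "(fst y, snd (g y)) \<in> polydisc r \<and> 1 + fst y * deriv2 E (fst y, snd (g y)) \<noteq> 0"
      using g(2)[OF y] jac_g[OF y] jac[OF g(2)[OF y]] by (simp add: ge)
  qed
qed

lemma jacobian2_exp_twist:
  fixes w A :: "complex \<times> complex \<Rightarrow> complex"
  assumes w1: "((\<lambda>z. w (z, y2)) has_field_derivative w1) (at y1)"
    and w2: "((\<lambda>z. w (y1, z)) has_field_derivative w2) (at y2)"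
    and A1: "((\<lambda>z. A (z, y2)) has_field_derivative A1) (at y1)"
    and A2: "((\<lambda>z. A (y1, z)) has_field_derivative A2) (at y2)"
  shows "jacobian2 (\<lambda>y. fst y * exp (A y)) (\<lambda>y. w y * exp (- A y)) (y1, y2)
           = w2 - w (y1, y2) * A2 + y1 * (A1 * w2 - A2 * w1)"
proof -
  let ?e = "exp (A (y1, y2))"
  have d11: "deriv1 (\<lambda>y. fst y * exp (A y)) (y1, y2) = ?e * (1 + y1 * A1)"
    by (rule deriv1_eqI) (auto intro!: derivative_eq_intros A1 simp: algebra_simps)
  have d12: "deriv2 (\<lambda>y. fst y * exp (A y)) (y1, y2) = ?e * y1 * A2"
    by (rule deriv2_eqI) (auto intro!: derivative_eq_intros A2 simp: algebra_simps)
  have d21: "deriv1 (\<lambda>y. w y * exp (- A y)) (y1, y2) = (w1 - w (y1, y2) * A1) / ?e"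
    by (rule deriv1_eqI) (auto intro!: derivative_eq_intros A1 w1 simp: exp_minus field_simps)
  have d22: "deriv2 (\<lambda>y. w y * exp (- A y)) (y1, y2) = (w2 - w (y1, y2) * A2) / ?e"
    by (rule deriv2_eqI) (auto intro!: derivative_eq_intros A2 w2 simp: exp_minus field_simps)
  show ?thesis
    unfolding jacobian2_def d11 d12 d21 d22 by (simp add: field_simps)
qed

lemma jacobian2_sheared_exp_twist_eq_1:
  fixes E a :: "complex \<times> complex \<Rightarrow> complex" and y1 y2 :: complex
  defines "w \<equiv> \<lambda>y. snd y + E (fst y, fst y * snd y)"
    and "A \<equiv> \<lambda>y. a (fst y, fst y * (snd y + E (fst y, fst y * snd y)))"
  assumes E: "holomorphic2_on E S" "(y1, y1 * y2) \<in> S"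
    and a: "holomorphic2_on a T" "(y1, y1 * w (y1, y2)) \<in> T"
    and nz: "1 + y1 * deriv2 E (y1, y1 * y2) \<noteq> 0"
    and a1: "deriv1 a (y1, y1 * w (y1, y2)) = - deriv2 E (y1, y1 * y2) / (1 + y1 * deriv2 E (y1, y1 * y2))"
  shows "jacobian2 (\<lambda>y. fst y * exp (A y)) (\<lambda>y. w y * exp (- A y)) (y1, y2) = 1"
proof -
  define E1 E2 where "E1 = deriv1 E (y1, y1 * y2)" and "E2 = deriv2 E (y1, y1 * y2)"
  define a1 a2 where "a1 = deriv1 a (y1, y1 * w (y1, y2))" and "a2 = deriv2 a (y1, y1 * w (y1, y2))"
  have "((\<lambda>z. E (z, z * y2)) has_field_derivative E1 * 1 + E2 * y2) (at y1)"
    using has_field_derivative_compose2[OF E(1) DERIV_ident DERIV_cmult_right[OF DERIV_ident]] E(2)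
    by (simp add: E1_def E2_def)
  from DERIV_add[OF DERIV_const[of y2] this]
  have w1: "((\<lambda>z. w (z, y2)) has_field_derivative E1 + y2 * E2) (at y1)"
    by (simp add: w_def mult.commute)
  have "((\<lambda>z. E (y1, y1 * z)) has_field_derivative E1 * 0 + E2 * y1) (at y2)"
    using has_field_derivative_compose2[OF E(1) DERIV_const DERIV_cmult[OF DERIV_ident]] E(2)
    by (simp add: E1_def E2_def)
  from DERIV_add[OF DERIV_ident this]
  have w2: "((\<lambda>z. w (y1, z)) has_field_derivative 1 + y1 * E2) (at y2)"
    by (simp add: w_def mult.commute)
  have A_w: "A y = a (fst y, fst y * w y)" for y by (simp add: A_def w_def)
  have A1: "((\<lambda>z. A (z, y2)) has_field_derivative a1 + a2 * (w (y1, y2) + y1 * (E1 + y2 * E2))) (at y1)"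
    using has_field_derivative_compose2[OF a(1) DERIV_ident DERIV_mult[OF DERIV_ident w1]] a(2)
    by (simp add: A_w a1_def a2_def algebra_simps)
  have A2: "((\<lambda>z. A (y1, z)) has_field_derivative a2 * (y1 * (1 + y1 * E2))) (at y2)"
    using has_field_derivative_compose2[OF a(1) DERIV_const DERIV_cmult[OF w2, of y1]] a(2)
    by (simp add: A_w a1_def a2_def algebra_simps)
  have "jacobian2 (\<lambda>y. fst y * exp (A y)) (\<lambda>y. w y * exp (- A y)) (y1, y2) = (1 + y1 * E2) * (1 + y1 * a1)"
    by (simp add: jacobian2_exp_twist[OF w1 w2 A1 A2] algebra_simps)
  also have "\<dots> = 1"
    using nz a1 by (simp add: a1_def E2_def field_simps)
  finally show ?thesis .
qed

text \<open>In the coordinates \<open>(x, k) = (y1, y1 w)\<close> the condition \<open>det Du = 1\<close> is the transport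
  equation below for \<open>a\<close>; its solution is a primitive in \<open>x\<close>.\<close>

lemma shear_transport_solution:
  assumes E: "holomorphic2_on E (polydisc r)" and r: "r > 0"
  obtains U s a where "open U" "(0, 0) \<in> U" "U \<subseteq> polydisc r" "s > 0" "holomorphic2_on a (polydisc s)"
    "\<And>q. q \<in> U \<Longrightarrow> (fst q, snd q + fst q * E q) \<in> polydisc s \<Longrightarrow>
       1 + fst q * deriv2 E q \<noteq> 0 \<and>
       deriv1 a (fst q, snd q + fst q * E q) = - deriv2 E q / (1 + fst q * deriv2 E q)"
proof -
  obtain U V \<eta> where U: "open U" "U \<subseteq> polydisc r" "(0, 0) \<in> U" and V: "open V" "(0, 0) \<in> V"
    and \<eta>: "holomorphic2_on \<eta> V"
    and \<eta>_inv: "\<And>q. q \<in> U \<Longrightarrow> (fst q, snd q + fst q * E q) \<in> V \<and> \<eta> (fst q, snd q + fst q * E q) = snd q"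
    and \<eta>_V: "\<And>y. y \<in> V \<Longrightarrow> (fst y, \<eta> y) \<in> polydisc r \<and> 1 + fst y * deriv2 E (fst y, \<eta> y) \<noteq> 0"
    using shear_local_inverse[OF E r] by blast
  define g where "g y = - deriv2 E (fst y, \<eta> y) / (1 + fst y * deriv2 E (fst y, \<eta> y))" for y
  have E2: "holomorphic2_on (\<lambda>y. deriv2 E (fst y, \<eta> y)) V"
    by (rule holomorphic2_on_compose2[OF holomorphic2_on_deriv2[OF E] holomorphic2_on_fst[OF V(1)] \<eta>])
      (use \<eta>_V in blast)
  have "holomorphic2_on (\<lambda>y. 1 + fst y * deriv2 E (fst y, \<eta> y)) V"
    by (intro holomorphic2_on_add holomorphic2_on_mult holomorphic2_on_const holomorphic2_on_fst V(1) E2)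
  then have "holomorphic2_on g V"
    unfolding g_def[abs_def] by (rule holomorphic2_on_divide[OF holomorphic2_on_minus[OF E2]]) (use \<eta>_V in blast)
  obtain s where s: "s > 0" "polydisc s \<subseteq> V" by (rule polydisc_subset_open[OF V])
  have g: "holomorphic2_on g (polydisc s)"
    by (rule holomorphic2_on_subset[OF \<open>holomorphic2_on g V\<close> open_polydisc s(2)])
  show ?thesis
  proof (rule that[OF U(1,3,2) s(1) holomorphic2_on_mult[OF holomorphic2_on_fst holomorphic2_on_segment_mean1[OF g]]])
    fix q assume q: "q \<in> U" and qs: "(fst q, snd q + fst q * E q) \<in> polydisc s"
    have \<eta>q: "\<eta> (fst q, snd q + fst q * E q) = snd q" and "(fst q, snd q + fst q * E q) \<in> V"
      using \<eta>_inv[OF q] by auto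
    then have "1 + fst q * deriv2 E q \<noteq> 0" using \<eta>_V by fastforce
    moreover have "deriv1 (\<lambda>p. fst p * segment_mean1 g p) (fst q, snd q + fst q * E q)
        = - deriv2 E q / (1 + fst q * deriv2 E q)"
      using deriv1_mult_segment_mean1[OF g qs] by (simp add: g_def \<eta>q)
    ultimately show "1 + fst q * deriv2 E q \<noteq> 0 \<and>
       deriv1 (\<lambda>p. fst p * segment_mean1 g p) (fst q, snd q + fst q * E q) = - deriv2 E q / (1 + fst q * deriv2 E q)"
      by blast
  qed simp
qed

lemma holomorphic2_on_sheared_coordinate:
  assumes E: "holomorphic2_on E T" and W: "open W" and WT: "\<And>y. y \<in> W \<Longrightarrow> (fst y, fst y * snd y) \<in> T"
  shows "holomorphic2_on (\<lambda>y. snd y + E (fst y, fst y * snd y)) W"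
  by (intro holomorphic2_on_add holomorphic2_on_snd W holomorphic2_on_compose2[OF E]
      holomorphic2_on_fst holomorphic2_on_mult WT)

lemma shear_exp_twist_unimodular:
  fixes E :: "complex \<times> complex \<Rightarrow> complex"
  defines "w \<equiv> \<lambda>y. snd y + E (fst y, fst y * snd y)"
  assumes E: "holomorphic2_on E (polydisc r)" and r: "r > 0"
  obtains W A where "open W" "0 \<in> W"
    "holomorphic2_on (\<lambda>y. fst y * exp (A y)) W" "holomorphic2_on (\<lambda>y. w y * exp (- A y)) W"
    "\<And>y. y \<in> W \<Longrightarrow> jacobian2 (\<lambda>y. fst y * exp (A y)) (\<lambda>y. w y * exp (- A y)) y = 1"
proof -
  obtain U s a where U: "open U" "(0, 0) \<in> U" "U \<subseteq> polydisc r" and s: "s > 0"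
    and a: "holomorphic2_on a (polydisc s)"
    and a1: "\<And>q. q \<in> U \<Longrightarrow> (fst q, snd q + fst q * E q) \<in> polydisc s \<Longrightarrow>
       1 + fst q * deriv2 E q \<noteq> 0 \<and>
       deriv1 a (fst q, snd q + fst q * E q) = - deriv2 E q / (1 + fst q * deriv2 E q)"
    using shear_transport_solution[OF E r] by blast
  define m where "m y = (fst y, fst y * snd y)" for y :: "complex \<times> complex"
  define W0 where "W0 = m -` U"
  have W0: "open W0"
    unfolding W0_def m_def by (rule continuous_open_vimage[OF U(1)]) (auto intro!: continuous_intros)
  have w: "holomorphic2_on w W0"
    unfolding w_def by (rule holomorphic2_on_sheared_coordinate[OF E W0]) (use U(3) in \<open>auto simp: W0_def m_def\<close>)
  have xw: "holomorphic2_on (\<lambda>y. fst y * w y) W0"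
    by (rule holomorphic2_on_mult[OF holomorphic2_on_fst[OF W0] w])
  define W where "W = W0 \<inter> (\<lambda>y. (fst y, fst y * w y)) -` polydisc s"
  have W: "open W"
    unfolding W_def using holomorphic2_onD(2)[OF xw]
    by (intro continuous_open_preimage W0 open_polydisc) (auto intro!: continuous_intros)
  define A where "A y = a (fst y, fst y * w y)" for y
  have A: "holomorphic2_on A W"
    unfolding A_def[abs_def]
    by (rule holomorphic2_on_compose2[OF a holomorphic2_on_fst[OF W] holomorphic2_on_subset[OF xw W]])
      (auto simp: W_def)
  show ?thesis
  proof (rule that[OF W])
    show "0 \<in> W" using U(2) s by (simp add: W_def W0_def m_def zero_prod_def w_def)
    show "holomorphic2_on (\<lambda>y. fst y * exp (A y)) W" "holomorphic2_on (\<lambda>y. w y * exp (- A y)) W"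
      using holomorphic2_on_subset[OF w W] A W
      by (auto simp: W_def intro!: holomorphic2_on_mult holomorphic2_on_fst holomorphic2_on_minus
          holomorphic2_on_compose[OF _ holomorphic_on_exp open_UNIV])
  next
    fix y assume "y \<in> W"
    then have q: "m y \<in> U" "(fst (m y), snd (m y) + fst (m y) * E (m y)) \<in> polydisc s"
      by (auto simp: W_def W0_def m_def w_def algebra_simps)
    show "jacobian2 (\<lambda>y. fst y * exp (A y)) (\<lambda>y. w y * exp (- A y)) y = 1"
      using jacobian2_sheared_exp_twist_eq_1[OF E _ a, of "fst y" "snd y"] a1[OF q] q U(3)
      by (auto simp: m_def w_def A_def algebra_simps)
  qed
qed

lemma birkhoff_siegel_normal_form_fst:
  fixes H :: "complex \<times> complex \<Rightarrow> complex" and G :: "complex \<Rightarrow> complex"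
    and \<Delta> :: "complex \<times> complex \<Rightarrow> complex"
  assumes G: "G analytic_on {0}" "G 0 = 0" "deriv G 0 \<noteq> 0" and \<Delta>: "analytic_germ2 \<Delta>"
    and H: "\<exists>r>0. \<forall>y\<in>ball 0 r. H y = G (fst y * snd y) + fst y * \<Delta> (fst y, fst y * snd y)"
  shows "\<exists>U u. 0 \<in> U \<and> symplectic_chart u U \<and> (\<forall>y\<in>U. H y = G (fst (u y) * snd (u y)))"
proof -
  obtain N r E where N: "open N" "0 \<in> N" and r: "r > 0" and E: "holomorphic2_on E (polydisc r)"
    and H_eq: "\<And>y. y \<in> N \<Longrightarrow> H y = G (fst y * (snd y + E (fst y, fst y * snd y)))"
    by (rule hamiltonian_eq_G_of_sheared_product[OF G \<Delta> H]) blast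
  define w where "w y = snd y + E (fst y, fst y * snd y)" for y
  obtain W A where W: "open W" "0 \<in> W" and u: "holomorphic2_on (\<lambda>y. fst y * exp (A y)) W"
    "holomorphic2_on (\<lambda>y. w y * exp (- A y)) W"
    and jac: "\<And>y. y \<in> W \<Longrightarrow> jacobian2 (\<lambda>y. fst y * exp (A y)) (\<lambda>y. w y * exp (- A y)) y = 1"
    using shear_exp_twist_unimodular[OF E r, folded w_def] by blast
  have WN: "open (W \<inter> N)" "W \<inter> N \<subseteq> W" "0 \<in> W \<inter> N" using W N by auto
  obtain U where U: "0 \<in> U" "U \<subseteq> W \<inter> N"
    and chart: "symplectic_chart (\<lambda>y. (fst y * exp (A y), w y * exp (- A y))) U"
    by (rule symplectic_chart_if_jacobian2_eq_1[OF holomorphic2_on_subset[OF u(1) WN(1,2)]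
          holomorphic2_on_subset[OF u(2) WN(1,2)] WN(3)]) (use jac in auto)
  have prod: "fst y * exp (A y) * (w y * exp (- A y)) = fst y * w y" for y
    by (simp add: exp_minus field_simps)
  show ?thesis
  proof (intro exI conjI ballI)
    show "0 \<in> U" by (rule U(1))
    show "symplectic_chart (\<lambda>y. (fst y * exp (A y), w y * exp (- A y))) U" by (rule chart)
    fix y assume "y \<in> U"
    then have "y \<in> N" using U(2) by blast
    then show "H y = G (fst (fst y * exp (A y), w y * exp (- A y)) * snd (fst y * exp (A y), w y * exp (- A y)))"
      using H_eq[of y] by (simp only: fst_conv snd_conv prod) (simp add: w_def)
  qed
qed

lemma has_derivative_swap: "(prod.swap has_derivative prod.swap) (at p)"
proof -
  have swap_eq: "prod.swap = (\<lambda>x. (snd x, fst x))" by (auto simp: fun_eq_iff)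
  show ?thesis
    unfolding swap_eq by (intro has_derivative_Pair has_derivative_snd has_derivative_fst has_derivative_ident)
qed

lemma symplectic_chart_swap:
  assumes "symplectic_chart u U"
  shows "symplectic_chart (prod.swap \<circ> u \<circ> prod.swap) (prod.swap -` U)"
  unfolding symplectic_chart_def
proof (intro conjI ballI)
  have U: "open U" "inj_on u U" and du: "\<And>z. z \<in> U \<Longrightarrow> \<exists>a b c d.
      (u has_derivative (\<lambda>(x, y). (a * x + b * y, c * x + d * y))) (at z) \<and> a * d - b * c = 1"
    using assms unfolding symplectic_chart_def by blast+
  show "open (prod.swap -` U)"
    by (rule continuous_open_vimage[OF U(1)]) (auto intro!: continuous_intros)
  show "inj_on (prod.swap \<circ> u \<circ> prod.swap) (prod.swap -` U)"
  proof (rule inj_onI)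
    fix x y assume xy: "x \<in> prod.swap -` U" "y \<in> prod.swap -` U"
      "(prod.swap \<circ> u \<circ> prod.swap) x = (prod.swap \<circ> u \<circ> prod.swap) y"
    then have "u (prod.swap x) = u (prod.swap y)" by (metis comp_apply swap_swap)
    with xy U(2) have "prod.swap x = prod.swap y" by (auto dest: inj_onD)
    then show "x = y" by (metis swap_swap)
  qed
  fix z assume "z \<in> prod.swap -` U"
  then have "prod.swap z \<in> U" by simp
  then obtain a b c d where d: "(u has_derivative (\<lambda>(x, y). (a * x + b * y, c * x + d * y))) (at (prod.swap z))"
    and det: "a * d - b * c = 1" using du by blast
  have "((\<lambda>x. prod.swap (u (prod.swap x))) has_derivative (\<lambda>(x, y). (d * x + c * y, b * x + a * y))) (at z)"
    using has_derivative_compose[OF has_derivative_compose[OF has_derivative_swap d] has_derivative_swap]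
    by (rule has_derivative_eq_rhs) (auto simp: fun_eq_iff)
  then have "((prod.swap \<circ> u \<circ> prod.swap) has_derivative (\<lambda>(x, y). (d * x + c * y, b * x + a * y))) (at z)"
    by (simp add: comp_def)
  moreover have "d * a - c * b = 1" using det by (simp add: algebra_simps)
  ultimately show "\<exists>a b c d. ((prod.swap \<circ> u \<circ> prod.swap) has_derivative
      (\<lambda>(x, y). (a * x + b * y, c * x + d * y))) (at z) \<and> a * d - b * c = 1"
    by blast
qed

theorem mainTheorem8:
  fixes H :: "complex \<times> complex \<Rightarrow> complex"
    and G :: "complex \<Rightarrow> complex"
    and \<Delta> :: "complex \<times> complex \<Rightarrow> complex"
    and lam :: complex
    and i :: nat
  assumes i: "i \<in> {1, 2}"
    and G_an: "G analytic_on {0}"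
    and G0: "G 0 = 0"
    and G1: "deriv G 0 = lam"
    and lam: "lam \<noteq> 0"
    and D_an: "analytic_germ2 \<Delta>"
    and H_form: "\<exists>r>0. \<forall>y\<in>ball 0 r.
        H y = G (fst y * snd y)
              + (if i = 1 then fst y else snd y)
                * \<Delta> (if i = 1 then fst y else snd y, fst y * snd y)"
  shows "\<exists>U u. 0 \<in> U \<and> symplectic_chart u U \<and>
           (\<forall>y\<in>U. H y = G (fst (u y) * snd (u y)))"
proof -
  have G': "deriv G 0 \<noteq> 0" using G1 lam by simp
  consider "i = 1" | "i = 2" using i by auto
  then show ?thesis
  proof cases
    case 1
    with H_form show ?thesis by (intro birkhoff_siegel_normal_form_fst[OF G_an G0 G' D_an]) simp
  next
    case 2
    have "norm (prod.swap y) = norm y" for y :: "complex \<times> complex"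
      by (cases y) (simp add: norm_Pair add.commute)
    then have "\<exists>r>0. \<forall>y\<in>ball 0 r. (H \<circ> prod.swap) y = G (fst y * snd y) + fst y * \<Delta> (fst y, fst y * snd y)"
      using H_form 2 by (auto simp: mult.commute)
    then obtain U u where "0 \<in> U" "symplectic_chart u U" "\<forall>y\<in>U. (H \<circ> prod.swap) y = G (fst (u y) * snd (u y))"
      using birkhoff_siegel_normal_form_fst[OF G_an G0 G' D_an] by blast
    then show ?thesis
      by (intro exI[of _ "prod.swap -` U"] exI[of _ "prod.swap \<circ> u \<circ> prod.swap"])
        (auto simp: symplectic_chart_swap mult.commute zero_prod_def)
  qed
qed

end
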